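(* Let $A_k\in\mathbb{R}^{m\times n_k}$ be matrices and $Q_k\in\mathbb{R}^{p\times p}$ orthogonal matrices, for $k=1,\dots,K$. Then the matrices $$X:=[A_1\ \cdots\ A_K]\quad\text{and}\quad Y:=[A_1\otimes Q_1\ \cdots\ A_K\otimes Q_K]$$ have the same singular values up to multiplicities.
   Context: $\otimes$ denotes the Kronecker product of matrices. *)

theory Defs
  imports "Jordan_Normal_Form.Matrix" "Jordan_Normal_Form.Char_Poly"
begin

definition hcat :: "nat \<Rightarrow> 'a mat list \<Rightarrow> 'a mat" where
  "hcat r Bs = mat_of_cols r (concat (map cols Bs))"

definition kron :: "'a::times mat \<Rightarrow> 'a mat \<Rightarrow> 'a mat" where
  "kron A B = mat (dim_row A * dim_row B) (dim_col A * dim_col B)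
     (\<lambda>(i,j). A $$ (i div dim_row B, j div dim_col B) * B $$ (i mod dim_row B, j mod dim_col B))"

definition orthogonal_real :: "nat \<Rightarrow> real mat \<Rightarrow> bool" where
  "orthogonal_real p Q \<longleftrightarrow> Q \<in> carrier_mat p p \<and> transpose_mat Q * Q = 1\<^sub>m p"

text \<open>Set of singular values of a real m x n matrix A: the nonnegative square roots of the
  eigenvalues of A^T A (if n \<le> m) or of A A^T (if m < n), i.e. the min(m,n) singular values,
  taken as a set (multiplicities ignored).\<close>
definition singular_values :: "real mat \<Rightarrow> real set" where
  "singular_values A = {\<sigma>. \<sigma> \<ge> 0 \<and>
     eigenvalue (if dim_col A \<le> dim_row A then transpose_mat A * A else A * transpose_mat A) (\<sigma>\<^sup>2)}"

end

theory Submission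
  imports Defs
begin

text \<open>Let \<open>D\<close> be the block-diagonal matrix with blocks \<open>I\<^sub>n\<^sub>k \<otimes> Q\<^sub>k\<close>; it is orthogonal.
  By the mixed-product rule \<open>A\<^sub>k \<otimes> Q\<^sub>k = (A\<^sub>k \<otimes> I\<^sub>p) (I\<^sub>n\<^sub>k \<otimes> Q\<^sub>k)\<close>, hence
  \<open>Y = (X \<otimes> I\<^sub>p) D\<close>. Right multiplication by an orthogonal matrix does not change the
  singular values: \<open>Y Y\<^sup>T = (X \<otimes> I\<^sub>p) (X \<otimes> I\<^sub>p)\<^sup>T\<close>, and \<open>Y\<^sup>T Y\<close> is orthogonally similar to
  \<open>(X \<otimes> I\<^sub>p)\<^sup>T (X \<otimes> I\<^sub>p)\<close>. Finally the Gram matrices of \<open>X \<otimes> I\<^sub>p\<close> are those of \<open>X\<close>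
  tensored with \<open>I\<^sub>p\<close>, and \<open>M \<otimes> I\<^sub>p\<close> has the same eigenvalues as \<open>M\<close>: it acts as \<open>M\<close> on each
  of the \<open>p\<close> interleaved subvectors \<open>(w\<^sub>a, w\<^sub>p\<^sub>+\<^sub>a, w\<^sub>2\<^sub>p\<^sub>+\<^sub>a, \<dots>)\<close>.\<close>

lemma mult_add_less_mult:
  fixes i a n p :: nat
  assumes "i < n" "a < p"
  shows "i * p + a < n * p"
proof -
  have "i * p + a < Suc i * p" using assms(2) by simp
  also have "\<dots> \<le> n * p" using assms(1) by (intro mult_le_mono1) simp
  finally show ?thesis .
qed

lemma mult_add_less_mult_iff:
  fixes i a n p :: nat
  assumes "a < p"
  shows "i * p + a < n * p \<longleftrightarrow> i < n"
proof
  assume "i * p + a < n * p"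
  then have "i * p < n * p" by linarith
  then show "i < n" by (simp add: mult_less_cancel2)
qed (use assms mult_add_less_mult in blast)

lemma mult_add_eq_iff: "a < p \<Longrightarrow> b < p \<Longrightarrow> i * p + a = j * p + b \<longleftrightarrow> i = j \<and> a = b"
  for i j a b p :: nat
  by (metis linorder_cases mult_add_less_mult nat_add_left_cancel_less not_add_less1)

lemma less_mult_cases:
  fixes r n p :: nat
  assumes "r < n * p"
  obtains i a where "r = i * p + a" "i < n" "a < p"
proof
  show "r = r div p * p + r mod p" by simp
  show "r div p < n" using assms by (simp add: less_mult_imp_div_less)
  show "r mod p < p" using assms by (cases "p = 0") auto
qed

lemma sum_lessThan_mult:
  fixes g :: "nat \<Rightarrow> 'a::comm_monoid_add"
  shows "(\<Sum>t<n * p. g t) = (\<Sum>c<n. \<Sum>b<p. g (c * p + b))"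
proof -
  have "sum g {c * p..<c * p + p} = (\<Sum>b<p. g (c * p + b))" for c
    using sum.shift_bounds_nat_ivl[of g 0 "c * p" p] by (simp add: atLeast0LessThan ac_simps)
  then show ?thesis
    by (simp flip: sum.nat_group)
qed

lemma index_mult_mat_sum:
  assumes "A \<in> carrier_mat n k" "B \<in> carrier_mat k l" "i < n" "j < l"
  shows "(A * B) $$ (i, j) = (\<Sum>t<k. A $$ (i, t) * B $$ (t, j))"
  using assms by (simp add: scalar_prod_def atLeast0LessThan)

section \<open>Kronecker products\<close>

lemma kron_carrier_mat [simp]:
  "kron A B \<in> carrier_mat (dim_row A * dim_row B) (dim_col A * dim_col B)"
  unfolding kron_def by simp

lemma dim_kron [simp]:
  "dim_row (kron A B) = dim_row A * dim_row B"
  "dim_col (kron A B) = dim_col A * dim_col B"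
  unfolding kron_def by simp_all

lemma index_kron:
  assumes "i < dim_row A" "j < dim_col A" "a < dim_row B" "b < dim_col B"
  shows "kron A B $$ (i * dim_row B + a, j * dim_col B + b) = A $$ (i, j) * B $$ (a, b)"
  using assms by (simp add: kron_def mult_add_less_mult)

lemma transpose_kron:
  "transpose_mat (kron A B) = kron (transpose_mat A) (transpose_mat B)"
proof (rule eq_matI)
  fix r s
  assume "r < dim_row (kron (transpose_mat A) (transpose_mat B))"
    and "s < dim_col (kron (transpose_mat A) (transpose_mat B))"
  then obtain i a j b where "r = i * dim_col B + a" "i < dim_col A" "a < dim_col B"
    and "s = j * dim_row B + b" "j < dim_row A" "b < dim_row B"
    by (auto elim!: less_mult_cases)
  then show "transpose_mat (kron A B) $$ (r, s) = kron (transpose_mat A) (transpose_mat B) $$ (r, s)"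
    using index_kron[of j A i b B a] index_kron[of i "transpose_mat A" j a "transpose_mat B" b]
    by (simp add: mult_add_less_mult)
qed simp_all

lemma kron_one_one: "kron (1\<^sub>m n) (1\<^sub>m p) = (1\<^sub>m (n * p) :: 'a::semiring_1 mat)"
proof (rule eq_matI)
  fix r s
  assume "r < dim_row (1\<^sub>m (n * p) :: 'a mat)" "s < dim_col (1\<^sub>m (n * p) :: 'a mat)"
  then obtain i a j b where "r = i * p + a" "i < n" "a < p" "s = j * p + b" "j < n" "b < p"
    by (auto elim!: less_mult_cases)
  then show "kron (1\<^sub>m n) (1\<^sub>m p) $$ (r, s) = (1\<^sub>m (n * p) :: 'a mat) $$ (r, s)"
    using index_kron[of i "1\<^sub>m n :: 'a mat" j a "1\<^sub>m p" b] by (auto simp: mult_add_less_mult mult_add_eq_iff)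
qed simp_all

lemma mult_kron:
  fixes A B C E :: "'a::comm_semiring_0 mat"
  assumes A: "A \<in> carrier_mat n1 k1" and C: "C \<in> carrier_mat k1 l1"
    and B: "B \<in> carrier_mat n2 k2" and E: "E \<in> carrier_mat k2 l2"
  shows "kron A B * kron C E = kron (A * C) (B * E)"
proof (rule eq_matI)
  fix r s
  assume "r < dim_row (kron (A * C) (B * E))" "s < dim_col (kron (A * C) (B * E))"
  then obtain i a j b where r: "r = i * n2 + a" "i < n1" "a < n2"
    and s: "s = j * l2 + b" "j < l1" "b < l2"
    using assms by (auto elim!: less_mult_cases)
  have "(kron A B * kron C E) $$ (r, s) = (\<Sum>t<k1 * k2. kron A B $$ (r, t) * kron C E $$ (t, s))"
    by (rule index_mult_mat_sum) (use assms r s in \<open>auto simp: mult_add_less_mult\<close>)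
  also have "\<dots> = (\<Sum>c<k1. \<Sum>d<k2. (A $$ (i, c) * B $$ (a, d)) * (C $$ (c, j) * E $$ (d, b)))"
    unfolding sum_lessThan_mult r(1) s(1)
    by (intro sum.cong refl) (use assms r s index_kron[of i A _ a B] index_kron[of _ C j _ E b] in simp)
  also have "\<dots> = (\<Sum>c<k1. \<Sum>d<k2. (A $$ (i, c) * C $$ (c, j)) * (B $$ (a, d) * E $$ (d, b)))"
    by (simp add: mult_ac)
  also have "\<dots> = (A * C) $$ (i, j) * (B * E) $$ (a, b)"
    by (simp only: index_mult_mat_sum[OF A C r(2) s(2)] index_mult_mat_sum[OF B E r(3) s(3)] sum_product)
  also have "\<dots> = kron (A * C) (B * E) $$ (r, s)"
    using assms r s index_kron[of i "A * C" j a "B * E" b] by simp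
  finally show "(kron A B * kron C E) $$ (r, s) = kron (A * C) (B * E) $$ (r, s)" .
qed simp_all

lemma kron_eq_kron_one_mult_one_kron:
  fixes B Q :: "'a::comm_semiring_1 mat"
  assumes "Q \<in> carrier_mat p q"
  shows "kron B Q = kron B (1\<^sub>m p) * kron (1\<^sub>m (dim_col B)) Q"
proof -
  have "kron B (1\<^sub>m p) * kron (1\<^sub>m (dim_col B)) Q = kron (B * 1\<^sub>m (dim_col B)) (1\<^sub>m p * Q)"
    by (rule mult_kron) (use assms in auto)
  with assms show ?thesis by simp
qed

lemma transpose_kron_one_mult_self:
  fixes Q :: "'a::comm_semiring_1 mat"
  assumes "Q \<in> carrier_mat p p" "transpose_mat Q * Q = 1\<^sub>m p"
  shows "transpose_mat (kron (1\<^sub>m n) Q) * kron (1\<^sub>m n) Q = 1\<^sub>m (n * p)"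
proof -
  have "transpose_mat (kron (1\<^sub>m n) Q) * kron (1\<^sub>m n) Q = kron (1\<^sub>m n * 1\<^sub>m n) (transpose_mat Q * Q)"
    unfolding transpose_kron transpose_one by (rule mult_kron) (use assms in auto)
  with assms(2) show ?thesis
    by (simp add: kron_one_one)
qed

section \<open>Horizontal and block-diagonal concatenation\<close>

lemma dim_hcat [simp]:
  "dim_row (hcat r Bs) = r"
  "dim_col (hcat r Bs) = sum_list (map dim_col Bs)"
  unfolding hcat_def by (simp_all add: length_concat comp_def)

lemma hcat_carrier_mat [simp]: "hcat r Bs \<in> carrier_mat r (sum_list (map dim_col Bs))"
  by (rule carrier_matI) simp_all

lemma hcat_Nil: "hcat r [] = 0\<^sub>m r 0"
  unfolding hcat_def by (rule eq_matI) simp_all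

lemma hcat_Cons:
  assumes "B \<in> carrier_mat r n"
  shows "hcat r (B # Bs) = four_block_mat B (hcat r Bs) (0\<^sub>m 0 n) (0\<^sub>m 0 (sum_list (map dim_col Bs)))"
proof (rule eq_matI)
  fix i j
  assume "i < dim_row (four_block_mat B (hcat r Bs) (0\<^sub>m 0 n) (0\<^sub>m 0 (sum_list (map dim_col Bs))))"
    and "j < dim_col (four_block_mat B (hcat r Bs) (0\<^sub>m 0 n) (0\<^sub>m 0 (sum_list (map dim_col Bs))))"
  with assms have "i < r" "j < n + sum_list (map dim_col Bs)" by simp_all
  with assms show "hcat r (B # Bs) $$ (i, j) =
      four_block_mat B (hcat r Bs) (0\<^sub>m 0 n) (0\<^sub>m 0 (sum_list (map dim_col Bs))) $$ (i, j)"
    by (simp add: hcat_def mat_of_cols_index nth_append length_concat comp_def)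
qed (use assms in simp_all)

lemma kron_four_block_mat_row:
  assumes "A \<in> carrier_mat r na" "B \<in> carrier_mat r nb"
  shows "kron (four_block_mat A B (0\<^sub>m 0 na) (0\<^sub>m 0 nb)) C =
    four_block_mat (kron A C) (kron B C) (0\<^sub>m 0 (na * dim_col C)) (0\<^sub>m 0 (nb * dim_col C))"
    (is "kron ?F C = ?G")
proof (rule eq_matI)
  fix s t
  assume "s < dim_row ?G" "t < dim_col ?G"
  with assms have st: "s < r * dim_row C" "t < na * dim_col C + nb * dim_col C"
    by simp_all
  then obtain i a j b where s: "s = i * dim_row C + a" "i < r" "a < dim_row C"
    and t: "t = j * dim_col C + b" "j < na + nb" "b < dim_col C"
    by (metis less_mult_cases add_mult_distrib)
  have "kron ?F C $$ (s, t) = ?F $$ (i, j) * C $$ (a, b)"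
    using index_kron[of i ?F j a C b] assms s t by simp
  also have "\<dots> = ?G $$ (s, t)"
  proof (cases "j < na")
    case True
    then show ?thesis
      using index_kron[of i A j a C b] assms s t st by (simp add: mult_add_less_mult_iff)
  next
    case False
    then have "t - na * dim_col C = (j - na) * dim_col C + b"
      using t(1) by (simp add: diff_mult_distrib)
    then show ?thesis
      using index_kron[of i B "j - na" a C b] False assms s t st
      by (simp add: mult_add_less_mult_iff add_mult_distrib)
  qed
  finally show "kron ?F C $$ (s, t) = ?G $$ (s, t)" .
qed (use assms in \<open>simp_all add: add_mult_distrib\<close>)

lemma kron_hcat:
  fixes C :: "'a::{zero,times} mat"
  assumes "\<forall>B\<in>set Bs. dim_row B = r"
  shows "kron (hcat r Bs) C = hcat (r * dim_row C) (map (\<lambda>B. kron B C) Bs)"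
  using assms
proof (induction Bs)
  case Nil
  show ?case by (rule eq_matI) (simp_all add: hcat_Nil)
next
  case (Cons B Bs)
  have B: "B \<in> carrier_mat r (dim_col B)" using Cons.prems by auto
  have BC: "kron B C \<in> carrier_mat (r * dim_row C) (dim_col B * dim_col C)"
    using B kron_carrier_mat[of B C] by (metis carrier_matD(1))
  have N: "sum_list (map dim_col (map (\<lambda>B. kron B C) Bs)) = sum_list (map dim_col Bs) * dim_col C"
    by (simp add: comp_def sum_list_mult_const)
  have "kron (hcat r (B # Bs)) C = four_block_mat (kron B C) (kron (hcat r Bs) C)
      (0\<^sub>m 0 (dim_col B * dim_col C)) (0\<^sub>m 0 (sum_list (map dim_col Bs) * dim_col C))"
    by (simp only: hcat_Cons[OF B] kron_four_block_mat_row[OF B hcat_carrier_mat])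
  also have "\<dots> = hcat (r * dim_row C) (map (\<lambda>B. kron B C) (B # Bs))"
    using Cons.IH Cons.prems by (simp only: hcat_Cons[OF BC] N list.map) simp
  finally show ?case .
qed

lemma hcat_mult_diag_block_mat:
  assumes "list_all2 (\<lambda>B D. B \<in> carrier_mat r (dim_row D)) Bs Ds"
  shows "hcat r (map2 (*) Bs Ds) = hcat r Bs * diag_block_mat Ds"
  using assms
proof (induction rule: list_all2_induct)
  case Nil
  show ?case by (simp add: hcat_Nil)
next
  case (Cons B Bs D Ds)
  obtain k l where D: "D \<in> carrier_mat k l" by blast
  obtain N M where E: "diag_block_mat Ds \<in> carrier_mat N M" by blast
  have "map dim_col Bs = map dim_row Ds"
    using Cons.hyps(2) by (induction rule: list_all2_induct) auto
  then have HN: "sum_list (map dim_col Bs) = N"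
    using E by (metis carrier_matD(1) dim_diag_block_mat(1))
  have B: "B \<in> carrier_mat r k" and H: "hcat r Bs \<in> carrier_mat r N"
    using Cons.hyps(1) D hcat_carrier_mat[of r Bs] HN by auto
  let ?H = "hcat r Bs" and ?E = "diag_block_mat Ds"
  have "hcat r (B # Bs) * diag_block_mat (D # Ds) =
      four_block_mat B ?H (0\<^sub>m 0 k) (0\<^sub>m 0 N) * four_block_mat D (0\<^sub>m k M) (0\<^sub>m N l) ?E"
    using D E by (simp add: hcat_Cons[OF B] HN Let_def)
  also have "\<dots> = four_block_mat (B * D + ?H * 0\<^sub>m N l) (B * 0\<^sub>m k M + ?H * ?E)
      (0\<^sub>m 0 k * D + 0\<^sub>m 0 N * 0\<^sub>m N l) (0\<^sub>m 0 k * 0\<^sub>m k M + 0\<^sub>m 0 N * ?E)"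
    by (rule mult_four_block_mat) (use B D H E in auto)
  also have "\<dots> = four_block_mat (B * D) (?H * ?E) (0\<^sub>m 0 l) (0\<^sub>m 0 M)"
    using B D H E by (simp add: right_mult_zero_mat[OF H])
  also have "\<dots> = hcat r (map2 (*) (B # Bs) (D # Ds))"
  proof -
    have "sum_list (map dim_col (map2 (*) Bs Ds)) = M"
      using Cons.IH E by (metis carrier_matD(2) dim_hcat(2) index_mult_mat(3))
    then show ?thesis
      using B D Cons.IH hcat_Cons[of "B * D" r l "map2 (*) Bs Ds"] by simp
  qed
  finally show ?case by (rule sym)
qed

lemma hcat_kron_eq_mult_diag_block_mat:
  fixes As Qs :: "'a::comm_semiring_1 mat list"
  assumes "length Qs = length As" "\<forall>B\<in>set As. dim_row B = m" "\<forall>Q\<in>set Qs. Q \<in> carrier_mat p p"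
  shows "hcat (m * p) (map2 kron As Qs) =
    kron (hcat m As) (1\<^sub>m p) * diag_block_mat (map2 (\<lambda>B Q. kron (1\<^sub>m (dim_col B)) Q) As Qs)"
proof -
  let ?Ks = "map (\<lambda>B. kron B (1\<^sub>m p)) As"
  let ?Ds = "map2 (\<lambda>B Q. kron (1\<^sub>m (dim_col B)) Q) As Qs"
  have "map2 kron As Qs = map2 (*) ?Ks ?Ds"
    using assms(1)[symmetric] assms(3)
    by (induction As Qs rule: list_induct2) (auto intro: kron_eq_kron_one_mult_one_kron)
  moreover have "list_all2 (\<lambda>K D. K \<in> carrier_mat (m * p) (dim_row D)) ?Ks ?Ds"
    using assms(1)[symmetric] assms(2,3) by (induction As Qs rule: list_induct2) auto
  ultimately have "hcat (m * p) (map2 kron As Qs) = hcat (m * p) ?Ks * diag_block_mat ?Ds"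
    by (simp add: hcat_mult_diag_block_mat)
  also have "hcat (m * p) ?Ks = kron (hcat m As) (1\<^sub>m p)"
    using kron_hcat[of As m "1\<^sub>m p"] assms(2) by simp
  finally show ?thesis .
qed

lemma transpose_diag_block_mat_mult_self:
  fixes Ds :: "'a::semiring_1 mat list"
  assumes "\<forall>D\<in>set Ds. transpose_mat D * D = 1\<^sub>m (dim_col D)"
  shows "transpose_mat (diag_block_mat Ds) * diag_block_mat Ds = 1\<^sub>m (dim_col (diag_block_mat Ds))"
  using assms
proof (induction Ds)
  case Nil
  show ?case by (rule eq_matI) auto
next
  case (Cons D Ds)
  obtain k l where D: "D \<in> carrier_mat k l" by blast
  obtain N M where E: "diag_block_mat Ds \<in> carrier_mat N M" by blast
  let ?E = "diag_block_mat Ds"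
  have DD: "transpose_mat D * D = 1\<^sub>m l" and EE: "transpose_mat ?E * ?E = 1\<^sub>m M"
    using Cons D E by auto
  have "transpose_mat (diag_block_mat (D # Ds)) * diag_block_mat (D # Ds) =
      four_block_mat (transpose_mat D) (0\<^sub>m l N) (0\<^sub>m M k) (transpose_mat ?E) *
      four_block_mat D (0\<^sub>m k M) (0\<^sub>m N l) ?E"
    using D E by (simp add: Let_def transpose_four_block_mat[of D k l _ M _ N])
  also have "\<dots> = four_block_mat
      (transpose_mat D * D + 0\<^sub>m l N * 0\<^sub>m N l) (transpose_mat D * 0\<^sub>m k M + 0\<^sub>m l N * ?E)
      (0\<^sub>m M k * D + transpose_mat ?E * 0\<^sub>m N l) (0\<^sub>m M k * 0\<^sub>m k M + transpose_mat ?E * ?E)"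
    by (rule mult_four_block_mat) (use D E in auto)
  also have "\<dots> = four_block_mat (1\<^sub>m l) (0\<^sub>m l M) (0\<^sub>m M l) (1\<^sub>m M)"
    using D E DD EE by simp
  also have "\<dots> = 1\<^sub>m (dim_col (diag_block_mat (D # Ds)))"
    using D E by (simp add: Let_def)
  finally show ?case .
qed

lemma diag_block_mat_kron_one_orthogonal:
  fixes As Qs :: "'a::comm_semiring_1 mat list"
  assumes "length Qs = length As" "\<forall>Q\<in>set Qs. Q \<in> carrier_mat p p \<and> transpose_mat Q * Q = 1\<^sub>m p"
  defines "D \<equiv> diag_block_mat (map2 (\<lambda>B Q. kron (1\<^sub>m (dim_col B)) Q) As Qs)"
  shows "D \<in> carrier_mat (sum_list (map dim_col As) * p) (sum_list (map dim_col As) * p)"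
    and "transpose_mat D * D = 1\<^sub>m (sum_list (map dim_col As) * p)"
proof -
  let ?Ds = "map2 (\<lambda>B Q. kron (1\<^sub>m (dim_col B)) Q) As Qs"
  have rows: "sum_list (map dim_row ?Ds) = sum_list (map dim_col As) * p"
    and cols: "sum_list (map dim_col ?Ds) = sum_list (map dim_col As) * p"
    and blocks: "\<forall>K\<in>set ?Ds. transpose_mat K * K = 1\<^sub>m (dim_col K)"
    using assms(1)[symmetric] assms(2)
    by (induction As Qs rule: list_induct2) (auto simp: add_mult_distrib transpose_kron_one_mult_self)
  show "D \<in> carrier_mat (sum_list (map dim_col As) * p) (sum_list (map dim_col As) * p)"
    unfolding D_def by (rule carrier_matI) (simp_all only: dim_diag_block_mat rows cols)
  show "transpose_mat D * D = 1\<^sub>m (sum_list (map dim_col As) * p)"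
    unfolding D_def using transpose_diag_block_mat_mult_self[OF blocks]
    by (simp only: dim_diag_block_mat cols)
qed

section \<open>Eigenvalues and singular values\<close>

lemma eigenvalue_similar:
  fixes A B :: "'a::field mat"
  assumes "similar_mat A B"
  shows "eigenvalue A l \<longleftrightarrow> eigenvalue B l"
proof -
  obtain n where "A \<in> carrier_mat n n" "B \<in> carrier_mat n n"
    using similar_matD[OF assms] by auto
  then show ?thesis
    using char_poly_similar[OF assms] by (simp add: eigenvalue_root_char_poly)
qed

definition strided_subvec :: "nat \<Rightarrow> nat \<Rightarrow> nat \<Rightarrow> 'a vec \<Rightarrow> 'a vec" where
  "strided_subvec n p a w = vec n (\<lambda>c. w $ (c * p + a))"

lemma strided_subvec_carrier_vec [simp]: "strided_subvec n p a w \<in> carrier_vec n"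
  by (simp add: strided_subvec_def)

lemma strided_subvec_smult:
  assumes "w \<in> carrier_vec (n * p)" "a < p"
  shows "strided_subvec n p a (l \<cdot>\<^sub>v w) = l \<cdot>\<^sub>v strided_subvec n p a w"
  using assms by (intro eq_vecI) (simp_all add: strided_subvec_def mult_add_less_mult)

lemma strided_subvec_zero:
  "a < p \<Longrightarrow> strided_subvec n p a (0\<^sub>v (n * p)) = 0\<^sub>v n"
  by (intro eq_vecI) (simp_all add: strided_subvec_def mult_add_less_mult)

lemma eq_vec_strided_subvecI:
  assumes "v \<in> carrier_vec (n * p)" "w \<in> carrier_vec (n * p)"
    and "\<And>a. a < p \<Longrightarrow> strided_subvec n p a v = strided_subvec n p a w"
  shows "v = w"
proof (rule eq_vecI)
  fix r
  assume "r < dim_vec w"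
  with assms(2) obtain c a where r: "r = c * p + a" "c < n" "a < p"
    by (auto elim: less_mult_cases)
  then have "strided_subvec n p a v $ c = strided_subvec n p a w $ c"
    using assms(3) by simp
  with r show "v $ r = w $ r"
    by (simp add: strided_subvec_def)
qed (use assms in simp)

lemma strided_subvec_kron_one_mult_vec:
  fixes M :: "'a::semiring_1 mat"
  assumes M: "M \<in> carrier_mat n k" and w: "w \<in> carrier_vec (k * p)" and a: "a < p"
  shows "strided_subvec n p a (kron M (1\<^sub>m p) *\<^sub>v w) = M *\<^sub>v strided_subvec k p a w"
proof (rule eq_vecI)
  fix i
  assume "i < dim_vec (M *\<^sub>v strided_subvec k p a w)"
  with M have i: "i < n" by simp
  have "(kron M (1\<^sub>m p) *\<^sub>v w) $ (i * p + a) = (\<Sum>t<k * p. kron M (1\<^sub>m p) $$ (i * p + a, t) * w $ t)"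
    using M w i a by (simp add: scalar_prod_def atLeast0LessThan mult_add_less_mult)
  also have "\<dots> = (\<Sum>c<k. \<Sum>b<p. kron M (1\<^sub>m p) $$ (i * p + a, c * p + b) * w $ (c * p + b))"
    by (rule sum_lessThan_mult)
  also have "\<dots> = (\<Sum>c<k. \<Sum>b<p. (if b = a then M $$ (i, c) * w $ (c * p + b) else 0))"
    using M i a index_kron[of i M _ a "1\<^sub>m p"] by (intro sum.cong refl) auto
  also have "\<dots> = (M *\<^sub>v strided_subvec k p a w) $ i"
    using M i a by (simp add: strided_subvec_def scalar_prod_def atLeast0LessThan)
  finally show "strided_subvec n p a (kron M (1\<^sub>m p) *\<^sub>v w) $ i = (M *\<^sub>v strided_subvec k p a w) $ i"
    using i by (simp add: strided_subvec_def)
qed (use M in \<open>simp add: strided_subvec_def\<close>)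

lemma eigenvalue_kron_one:
  fixes M :: "'a::comm_ring_1 mat"
  assumes M: "M \<in> carrier_mat n n" and p: "0 < p"
  shows "eigenvalue (kron M (1\<^sub>m p)) l \<longleftrightarrow> eigenvalue M l"
proof
  assume "eigenvalue (kron M (1\<^sub>m p)) l"
  then obtain w where w: "w \<in> carrier_vec (n * p)" "w \<noteq> 0\<^sub>v (n * p)" "kron M (1\<^sub>m p) *\<^sub>v w = l \<cdot>\<^sub>v w"
    using M by (auto simp: eigenvalue_def eigenvector_def)
  obtain a where a: "a < p" "strided_subvec n p a w \<noteq> 0\<^sub>v n"
    using eq_vec_strided_subvecI[OF w(1) zero_carrier_vec] w(2) strided_subvec_zero by metis
  have "M *\<^sub>v strided_subvec n p a w = l \<cdot>\<^sub>v strided_subvec n p a w"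
    using strided_subvec_kron_one_mult_vec[OF M w(1) a(1)] w(3) strided_subvec_smult[OF w(1) a(1)]
    by simp
  with M a have "eigenvector M (strided_subvec n p a w) l"
    by (simp add: eigenvector_def)
  then show "eigenvalue M l"
    by (auto simp: eigenvalue_def)
next
  assume "eigenvalue M l"
  then obtain v where v: "v \<in> carrier_vec n" "v \<noteq> 0\<^sub>v n" "M *\<^sub>v v = l \<cdot>\<^sub>v v"
    using M by (auto simp: eigenvalue_def eigenvector_def)
  define w where "w = vec (n * p) (\<lambda>r. if r mod p = 0 then v $ (r div p) else 0)"
  have w: "w \<in> carrier_vec (n * p)" by (simp add: w_def)
  have sw: "strided_subvec n p a w = (if a = 0 then v else 0\<^sub>v n)" if "a < p" for a
    using that v(1) by (intro eq_vecI) (auto simp: w_def strided_subvec_def mult_add_less_mult)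
  have "M *\<^sub>v 0\<^sub>v n = l \<cdot>\<^sub>v 0\<^sub>v n"
    using M by (intro eq_vecI) auto
  have "kron M (1\<^sub>m p) *\<^sub>v w = l \<cdot>\<^sub>v w"
  proof (rule eq_vec_strided_subvecI)
    fix a
    assume a: "a < p"
    then show "strided_subvec n p a (kron M (1\<^sub>m p) *\<^sub>v w) = strided_subvec n p a (l \<cdot>\<^sub>v w)"
      using v \<open>M *\<^sub>v 0\<^sub>v n = l \<cdot>\<^sub>v 0\<^sub>v n\<close>
      by (simp add: strided_subvec_kron_one_mult_vec[OF M w a] strided_subvec_smult[OF w a] sw)
  qed (use M w in \<open>auto intro!: carrier_vecI\<close>)
  moreover have "w \<noteq> 0\<^sub>v (n * p)"
    using sw[OF p] v(2) strided_subvec_zero[OF p, of n] by auto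
  ultimately show "eigenvalue (kron M (1\<^sub>m p)) l"
    using M w by (auto simp: eigenvalue_def eigenvector_def)
qed

lemma singular_values_mult_orthogonal:
  assumes X: "X \<in> carrier_mat m n" and D: "D \<in> carrier_mat n n"
    and DD: "transpose_mat D * D = 1\<^sub>m n"
  shows "singular_values (X * D) = singular_values X"
proof -
  have DD': "D * transpose_mat D = 1\<^sub>m n"
    using mat_mult_left_right_inverse[OF _ D DD] D by simp
  have Dt: "transpose_mat D \<in> carrier_mat n n" and Xt: "transpose_mat X \<in> carrier_mat n m"
    and XtX: "transpose_mat X * X \<in> carrier_mat n n"
    using X D by simp_all
  have "transpose_mat (X * D) * (X * D) = transpose_mat D * (transpose_mat X * (X * D))"
    by (simp only: transpose_mult[OF X D] assoc_mult_mat[OF Dt Xt mult_carrier_mat[OF X D]])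
  also have "\<dots> = transpose_mat D * (transpose_mat X * X) * D"
    by (simp only: assoc_mult_mat[OF Xt X D] assoc_mult_mat[OF Dt XtX D])
  finally have gram_right: "transpose_mat (X * D) * (X * D) = transpose_mat D * (transpose_mat X * X) * D" .
  have "X * D * transpose_mat (X * D) = X * (D * (transpose_mat D * transpose_mat X))"
    by (simp only: transpose_mult[OF X D] assoc_mult_mat[OF X D mult_carrier_mat[OF Dt Xt]])
  also have "\<dots> = X * transpose_mat X"
    using Xt by (simp only: assoc_mult_mat[OF D Dt Xt, symmetric] DD' left_mult_one_mat)
  finally have gram_left: "X * D * transpose_mat (X * D) = X * transpose_mat X" .
  have "similar_mat (transpose_mat D * (transpose_mat X * X) * D) (transpose_mat X * X)"
    by (rule similar_matI[where P = "transpose_mat D" and Q = D and n = n]) (use XtX D DD DD' in auto)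
  with gram_right gram_left X D show ?thesis
    by (simp add: singular_values_def eigenvalue_similar)
qed

lemma singular_values_kron_one:
  assumes "0 < p"
  shows "singular_values (kron X (1\<^sub>m p)) = singular_values X"
proof -
  obtain m n where X: "X \<in> carrier_mat m n" by blast
  then have Xt: "transpose_mat X \<in> carrier_mat n m" by simp
  have "transpose_mat (kron X (1\<^sub>m p)) * kron X (1\<^sub>m p) = kron (transpose_mat X * X) (1\<^sub>m p * 1\<^sub>m p)"
    unfolding transpose_kron transpose_one by (rule mult_kron[OF Xt X one_carrier_mat one_carrier_mat])
  moreover have "kron X (1\<^sub>m p) * transpose_mat (kron X (1\<^sub>m p)) = kron (X * transpose_mat X) (1\<^sub>m p * 1\<^sub>m p)"
    unfolding transpose_kron transpose_one by (rule mult_kron[OF X Xt one_carrier_mat one_carrier_mat])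
  moreover have "eigenvalue (kron (transpose_mat X * X) (1\<^sub>m p)) l \<longleftrightarrow> eigenvalue (transpose_mat X * X) l"
    and "eigenvalue (kron (X * transpose_mat X) (1\<^sub>m p)) l \<longleftrightarrow> eigenvalue (X * transpose_mat X) l" for l
    using mult_carrier_mat[OF Xt X] mult_carrier_mat[OF X Xt] assms by (simp_all add: eigenvalue_kron_one)
  ultimately show ?thesis
    using X assms by (simp add: singular_values_def)
qed

theorem lemma5p3:
  fixes As Qs :: "real mat list" and m p :: nat
  assumes "As \<noteq> []"
    and "length Qs = length As"
    and "\<forall>B \<in> set As. dim_row B = m"
    and "p > 0"
    and "\<forall>Q \<in> set Qs. orthogonal_real p Q"
  shows "singular_values (hcat m As) =
         singular_values (hcat (m * p) (map (\<lambda>(B, Q). kron B Q) (zip As Qs)))"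
proof -
  let ?X = "hcat m As" and ?D = "diag_block_mat (map2 (\<lambda>B Q. kron (1\<^sub>m (dim_col B)) Q) As Qs)"
  let ?n = "sum_list (map dim_col As) * p"
  have Q: "\<forall>Q\<in>set Qs. Q \<in> carrier_mat p p \<and> transpose_mat Q * Q = 1\<^sub>m p"
    using assms(5) by (simp add: orthogonal_real_def)
  have "hcat (m * p) (map (\<lambda>(B, Q). kron B Q) (zip As Qs)) = kron ?X (1\<^sub>m p) * ?D"
    using hcat_kron_eq_mult_diag_block_mat[OF assms(2,3)] Q by simp
  also have "singular_values \<dots> = singular_values (kron ?X (1\<^sub>m p))"
    by (rule singular_values_mult_orthogonal[of _ "m * p" ?n])
      (use diag_block_mat_kron_one_orthogonal[OF assms(2) Q] kron_carrier_mat[of ?X "1\<^sub>m p"] in simp_all)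
  also have "\<dots> = singular_values ?X"
    using assms(4) by (rule singular_values_kron_one)
  finally show ?thesis ..
qed

end
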